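(* Assume the approximating hidden model described in the context, with each $\hat h_k$ $\mathcal Y_k$-measurable, and let $q_k=\bar E[\Lambda_{0,k}X_k\mid\mathcal Y_k]$ (given by $q_0=B(y_0)p_0$, $q_{k+1}=B(y_{k+1})A(\hat h_k)q_k$). Fix $i\ne j$ and let $N^{ji}_k=\sum_{\ell=1}^k\langle X_{\ell-1},e_i\rangle\langle X_\ell,e_j\rangle$ (the number of jumps from $e_i$ to $e_j$ up to time $k$), and $\sigma(N^{ji}_kX_k)=\bar E[\Lambda_{0,k}N^{ji}_kX_k\mid\mathcal Y_k]$. Then $\sigma(N^{ji}_0X_0)=0$ and for all $k\ge0$ $$\sigma(N^{ji}_{k+1}X_{k+1})=B(y_{k+1})A(\hat h_k)\,\sigma(N^{ji}_kX_k)+a_{ji}(\hat h_k)\,\langle q_k,e_i\rangle\,\gamma_j(y_{k+1})\,e_j .$$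
   Context: Notation: $S=\{e_1,\dots,e_N\}$ unit vectors of $\mathbb R^N$; $\pi_i$ probability distributions on $\{1,2,\dots\}$ with $F_i(k)=\sum_{m>k}\pi_i(m)>0$; $p_{ji}\ge0$ ($j\ne i$) with $\sum_{j\ne i}p_{ji}=1$; hazard $\Delta^i(k)=\pi_i(k)/F_i(k-1)$ for $k\ge1$; $A(k)$ is the $N\times N$ matrix with $a_{ii}(k)=1-\Delta^i(k)$ and $a_{ji}(k)=p_{ji}\Delta^i(k)$ for $j\ne i$. Vectors $c,d\in\mathbb R^N$ with $d_i>0$; $\phi$ is the $N(0,1)$ density; $\gamma_j(y)=\dfrac{\phi((y-c_j)/d_j)}{d_j\phi(y)}$ and $B(y)=\mathrm{diag}(\gamma_1(y),\dots,\gamma_N(y))$. $\lambda_k=\gamma_j(y_k)$ on $\{X_k=e_j\}$ and $\Lambda_{0,k}=\prod_{\ell=0}^k\lambda_\ell$. $\mathcal Y_k=\sigma(y_0,\dots,y_k)$, $\mathcal Y_\infty=\sigma(y_0,y_1,\dots)$. Approximating hidden model: under a probability $\bar P$, $y_0,y_1,\dots$ are i.i.d. $N(0,1)$; $\hat h_0,\hat h_1,\dots$ are positive-integer-valued $\mathcal Y_\infty$-measurable random variables; and conditionally on $\mathcal Y_\infty$, $X=(X_k)$ is an $S$-valued Markov chain with $\bar P(X_0=e_i\mid\mathcal Y_\infty)=p_0^i$ (a fixed distribution $p_0$) and $\bar P(X_{k+1}=e_j\mid X_0,\dots,X_k,\mathcal Y_\infty)=a_{ji}(\hat h_k)$ on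 $\{X_k=e_i\}$. *)

theory Defs
  imports "HOL-Probability.Probability"
begin

text \<open>States e_1..e_N are encoded by the elements of a finite type 'i;
  X k w = i means X_k = e_i.\<close>

definition Fsurv :: "('i \<Rightarrow> nat pmf) \<Rightarrow> 'i \<Rightarrow> nat \<Rightarrow> real" where
  "Fsurv \<pi> i k = measure_pmf.prob (\<pi> i) {k<..}"

definition hazard :: "('i \<Rightarrow> nat pmf) \<Rightarrow> 'i \<Rightarrow> nat \<Rightarrow> real" where
  "hazard \<pi> i k = pmf (\<pi> i) k / Fsurv \<pi> i (k - 1)"

text \<open>Amat \<pi> p k j i is the entry a_{ji}(k) of A(k).\<close>
definition Amat :: "('i \<Rightarrow> nat pmf) \<Rightarrow> ('i \<Rightarrow> 'i \<Rightarrow> real) \<Rightarrow> nat \<Rightarrow> 'i \<Rightarrow> 'i \<Rightarrow> real" where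
  "Amat \<pi> p k j i = (if j = i then 1 - hazard \<pi> i k else p j i * hazard \<pi> i k)"

definition gam :: "('i \<Rightarrow> real) \<Rightarrow> ('i \<Rightarrow> real) \<Rightarrow> 'i \<Rightarrow> real \<Rightarrow> real" where
  "gam c d j y = std_normal_density ((y - c j) / d j) / (d j * std_normal_density y)"

definition Lam :: "('i \<Rightarrow> real) \<Rightarrow> ('i \<Rightarrow> real) \<Rightarrow> (nat \<Rightarrow> 'w \<Rightarrow> 'i) \<Rightarrow> (nat \<Rightarrow> 'w \<Rightarrow> real) \<Rightarrow> nat \<Rightarrow> 'w \<Rightarrow> real" where
  "Lam c d X y k w = (\<Prod>l\<le>k. gam c d (X l w) (y l w))"

definition Njump :: "(nat \<Rightarrow> 'w \<Rightarrow> 'i) \<Rightarrow> 'i \<Rightarrow> 'i \<Rightarrow> nat \<Rightarrow> 'w \<Rightarrow> real" where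
  "Njump X i j k w = (\<Sum>l\<in>{1..k}. of_bool (X (l - 1) w = i) * of_bool (X l w = j))"

definition Yalg :: "'w measure \<Rightarrow> (nat \<Rightarrow> 'w \<Rightarrow> real) \<Rightarrow> nat \<Rightarrow> 'w measure" where
  "Yalg M y k = sigma (space M) {y l -` B \<inter> space M | l B. l \<le> k \<and> B \<in> sets borel}"

definition XYalg :: "'w measure \<Rightarrow> (nat \<Rightarrow> 'w \<Rightarrow> 'i) \<Rightarrow> (nat \<Rightarrow> 'w \<Rightarrow> real) \<Rightarrow> nat \<Rightarrow> 'w measure" where
  "XYalg M X y k = sigma (space M)
     ({X l -` B \<inter> space M | l B. l \<le> k} \<union> {y l -` B \<inter> space M | l B. B \<in> sets borel})"

definition Yinf :: "'w measure \<Rightarrow> (nat \<Rightarrow> 'w \<Rightarrow> real) \<Rightarrow> 'w measure" where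
  "Yinf M y = sigma (space M) {y l -` B \<inter> space M | l B. B \<in> sets borel}"

definition qfilt :: "'w measure \<Rightarrow> ('i \<Rightarrow> real) \<Rightarrow> ('i \<Rightarrow> real) \<Rightarrow> (nat \<Rightarrow> 'w \<Rightarrow> 'i) \<Rightarrow> (nat \<Rightarrow> 'w \<Rightarrow> real) \<Rightarrow> nat \<Rightarrow> 'i \<Rightarrow> 'w \<Rightarrow> real" where
  "qfilt M c d X y k m = real_cond_exp M (Yalg M y k) (\<lambda>w. Lam c d X y k w * of_bool (X k w = m))"

definition sigmaNX :: "'w measure \<Rightarrow> ('i \<Rightarrow> real) \<Rightarrow> ('i \<Rightarrow> real) \<Rightarrow> (nat \<Rightarrow> 'w \<Rightarrow> 'i) \<Rightarrow> (nat \<Rightarrow> 'w \<Rightarrow> real) \<Rightarrow> 'i \<Rightarrow> 'i \<Rightarrow> nat \<Rightarrow> 'i \<Rightarrow> 'w \<Rightarrow> real" where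
  "sigmaNX M c d X y i j k m = real_cond_exp M (Yalg M y k)
     (\<lambda>w. Lam c d X y k w * Njump X i j k w * of_bool (X k w = m))"

end

theory Submission
  imports Defs
begin

text \<open>Put Z = Lambda_k (N_k + [m = j] <X_k, e_i>). Then
  Lambda_(k+1) N_(k+1) <X_(k+1), e_m> = gamma_m(y_(k+1)) Z <X_(k+1), e_m>, and Z is measurable with
  respect to the history sigma(X_0, ..., X_k, y_0, ..., y_k); so the recursion is one filtering step
  applied to such a Z. Conditioning first on sigma(X_0, ..., X_k) joined with Y_infinity replaces
  <X_(k+1), e_m> by a_(m X_k)(h_k). Afterwards y_(k+1) can be dropped from the conditioning
  sigma-algebra Y_(k+1), because it is independent of the history: given Y_infinity, the path
  X_0, ..., X_k = x_0, ..., x_k has probability p_0(x_0) prod_l a_(x_(l+1) x_l)(h_l), a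
  Y_k-measurable quantity, and y_(k+1) is independent of Y_k.\<close>

lemma sigma_generated_subalgebra:
  assumes "G \<subseteq> sets M"
  shows space_sigma_generated: "space (sigma (space M) G) = space M"
    and sets_sigma_generated: "sets (sigma (space M) G) = sigma_sets (space M) G"
    and subalgebra_sigma_generated: "subalgebra M (sigma (space M) G)"
proof -
  have G: "G \<subseteq> Pow (space M)" using assms sets.sets_into_space by blast
  show space: "space (sigma (space M) G) = space M" using G by (simp add: space_measure_of_conv)
  show sets: "sets (sigma (space M) G) = sigma_sets (space M) G" using G by (simp add: sets_measure_of_conv)
  show "subalgebra M (sigma (space M) G)"
    unfolding subalgebra_def using space sets assms by (simp add: sets.sigma_sets_subset)
qed

lemma measurable_sigma_generated:
  assumes "G \<subseteq> sets M" "f \<in> space M \<rightarrow> space N" "\<And>B. B \<in> sets N \<Longrightarrow> f -` B \<inter> space M \<in> G"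
  shows "f \<in> measurable (sigma (space M) G) N"
  using assms sigma_generated_subalgebra[OF assms(1)] by (intro measurableI) auto

lemma subalgebra_sigma_generated_mono:
  assumes "G1 \<subseteq> sets M" "G2 \<subseteq> sets M" "G1 \<subseteq> sigma_sets (space M) G2"
  shows "subalgebra (sigma (space M) G2) (sigma (space M) G1)"
  using sigma_generated_subalgebra[OF assms(1)] sigma_generated_subalgebra[OF assms(2)] assms(3)
  unfolding subalgebra_def by (simp add: sigma_sets_mono)

lemma subalgebra_trans: "subalgebra M G \<Longrightarrow> subalgebra G F \<Longrightarrow> subalgebra M F"
  unfolding subalgebra_def by auto

lemma borel_measurable_count_space_comp:
  "g \<in> measurable N (count_space UNIV) \<Longrightarrow> (\<lambda>w. f (g w) :: real) \<in> borel_measurable N"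
  by (rule measurable_compose[of g N "count_space UNIV" f]) auto

lemma set_integral_eq_on_sigma_sets:
  fixes f g :: "'a \<Rightarrow> real"
  assumes stable: "Int_stable G" and G: "G \<subseteq> sets M"
    and f: "integrable M f" and g: "integrable M g"
    and total: "(\<integral>x. f x \<partial>M) = (\<integral>x. g x \<partial>M)"
    and basic: "\<And>A. A \<in> G \<Longrightarrow> (\<integral>x\<in>A. f x \<partial>M) = (\<integral>x\<in>A. g x \<partial>M)"
    and A: "A \<in> sigma_sets (space M) G"
  shows "(\<integral>x\<in>A. f x \<partial>M) = (\<integral>x\<in>A. g x \<partial>M)"
proof -
  have sigma_M: "sigma_sets (space M) G \<subseteq> sets M" by (rule sets.sigma_sets_subset[OF G])
  have "G \<subseteq> Pow (space M)" using G by (auto dest: sets.sets_into_space)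
  from stable this A show ?thesis
  proof (induction rule: sigma_sets_induct_disjoint)
    case (basic A) then show ?case by (rule assms(6))
  next
    case empty then show ?case by (simp add: set_lebesgue_integral_def)
  next
    case (compl A)
    have AM: "A \<in> sets M" using compl(1) sigma_M by blast
    have diff: "(\<integral>x\<in>space M - A. u x \<partial>M) = (\<integral>x. u x \<partial>M) - (\<integral>x\<in>A. u x \<partial>M)"
      if u: "integrable M u" for u :: "'a \<Rightarrow> real"
    proof -
      have "(\<integral>x\<in>space M - A. u x \<partial>M) = (\<integral>x. u x - indicator A x * u x \<partial>M)"
        unfolding set_lebesgue_integral_def
        by (rule Bochner_Integration.integral_cong) (auto simp: indicator_def)
      also have "\<dots> = (\<integral>x. u x \<partial>M) - (\<integral>x. indicator A x * u x \<partial>M)"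
        by (rule Bochner_Integration.integral_diff[OF u integrable_mult_indicator[OF AM u, simplified]])
      finally show ?thesis unfolding set_lebesgue_integral_def by simp
    qed
    show ?case unfolding diff[OF f] diff[OF g] compl(2) total ..
  next
    case (union A)
    have AM: "A i \<in> sets M" for i using union(2) sigma_M by blast
    have int: "set_integrable M (\<Union>i. A i) u" if "integrable M u" for u :: "'a \<Rightarrow> real"
      unfolding set_integrable_def using AM that by (intro integrable_mult_indicator) auto
    have disj: "\<And>i j. i \<noteq> j \<Longrightarrow> A i \<inter> A j = {}" using union(1) by (auto simp: disjoint_family_on_def)
    have "(\<integral>x\<in>(\<Union>i. A i). f x \<partial>M) = (\<Sum>i. (\<integral>x\<in>A i. f x \<partial>M))"
      by (rule lebesgue_integral_countable_add[OF AM disj int[OF f]])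
    also have "\<dots> = (\<Sum>i. (\<integral>x\<in>A i. g x \<partial>M))" using union(3) by simp
    also have "\<dots> = (\<integral>x\<in>(\<Union>i. A i). g x \<partial>M)"
      by (rule lebesgue_integral_countable_add[OF AM disj int[OF g], symmetric])
    finally show ?case .
  qed
qed

section \<open>Conditioning on independent information\<close>

context prob_space
begin

lemma sigma_finite_subalgebra_of_subalgebra: "subalgebra M F \<Longrightarrow> sigma_finite_subalgebra M F"
  by (rule finite_measure_subalgebra_is_sigma_finite)
    (simp add: finite_measure_subalgebra_def finite_measure_subalgebra_axioms_def finite_measure_axioms)

lemma integrable_abs_bounded:
  fixes f :: "'a \<Rightarrow> real"
  shows "f \<in> borel_measurable M \<Longrightarrow> (\<And>w. w \<in> space M \<Longrightarrow> \<bar>f w\<bar> \<le> B) \<Longrightarrow> integrable M f"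
  by (rule integrable_const_bound[where B=B]) auto

lemma integral_mult_indep_subalgebras:
  fixes f g :: "'a \<Rightarrow> real"
  assumes F: "subalgebra M F" and G: "subalgebra M G" and indep: "indep_set (sets F) (sets G)"
    and f: "f \<in> borel_measurable F" and g: "g \<in> borel_measurable G"
    and fi: "integrable M f" and gi: "integrable M g"
  shows "(\<integral>x. f x * g x \<partial>M) = (\<integral>x. f x \<partial>M) * (\<integral>x. g x \<partial>M)"
proof -
  have id: "(\<lambda>x. x) \<in> measurable M H" if H: "subalgebra M H" for H
    using H sets.sets_into_space[of _ H] unfolding subalgebra_def
    by (intro measurableI) (auto simp: Int_absorb2)
  have gen: "sigma_sets (space M) {(\<lambda>x. x) -` A \<inter> space M | A. A \<in> sets H} = sets H"
    if H: "subalgebra M H" for H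
  proof -
    have "{(\<lambda>x. x) -` A \<inter> space M | A. A \<in> sets H} = sets H"
      using H sets.sets_into_space[of _ H] unfolding subalgebra_def
      by (auto simp: Int_absorb2)
    then show ?thesis using H sets.sigma_sets_eq[of H] unfolding subalgebra_def by simp
  qed
  have "indep_var F (\<lambda>x. x) G (\<lambda>x. x)" unfolding indep_var_eq
    using id[OF F] id[OF G] gen[OF F] gen[OF G] indep by simp
  then have "indep_var borel (f \<circ> (\<lambda>x. x)) borel (g \<circ> (\<lambda>x. x))"
    by (rule indep_var_compose) (fact f, fact g)
  then have "indep_var borel f borel g" by (simp add: comp_def)
  from indep_var_lebesgue_integral[OF this fi gi] show ?thesis .
qed

lemma set_integral_Int_indep:
  fixes u :: "'a \<Rightarrow> real"
  assumes G: "subalgebra M G" and H: "subalgebra M H" and indep: "indep_set (sets G) (sets H)"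
    and A: "A \<in> sets G" and B: "B \<in> sets H"
    and u: "u \<in> borel_measurable G" "integrable M u"
  shows "(\<integral>x\<in>A \<inter> B. u x \<partial>M) = (\<integral>x. indicator A x * u x \<partial>M) * prob B"
proof -
  have AM: "A \<in> events" and BM: "B \<in> events" using A B G H by (auto simp: subalgebra_def)
  have "(\<integral>x\<in>A \<inter> B. u x \<partial>M) = (\<integral>x. (indicator A x * u x) * indicator B x \<partial>M)"
    unfolding set_lebesgue_integral_def
    by (rule Bochner_Integration.integral_cong) (auto simp: indicator_def)
  also have "\<dots> = (\<integral>x. indicator A x * u x \<partial>M) * (\<integral>x. indicator B x \<partial>M)"
  proof (rule integral_mult_indep_subalgebras[OF G H indep])
    show "(\<lambda>x. indicator A x * u x) \<in> borel_measurable G"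
      using borel_measurable_indicator[OF A] u(1) by (rule borel_measurable_times)
    show "integrable M (\<lambda>x. indicator A x * u x)"
      using integrable_mult_indicator[OF AM u(2)] by simp
    show "integrable M (indicator B :: 'a \<Rightarrow> real)"
      by (rule integrable_abs_bounded[where B=1]) (auto simp: BM indicator_def borel_measurable_indicator)
  qed (rule borel_measurable_indicator[OF B])
  finally show ?thesis using BM by simp
qed

lemma real_cond_exp_indep_enlarge:
  fixes Z :: "'a \<Rightarrow> real"
  assumes G: "subalgebra M G" and GF: "subalgebra G F" and H: "subalgebra M H"
    and indep: "indep_set (sets G) (sets H)"
    and F': "subalgebra M F'" and F'F: "subalgebra F' F"
    and gen: "sets F' \<subseteq> sigma_sets (space M) {A \<inter> B | A B. A \<in> sets F \<and> B \<in> sets H}"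
    and Z: "Z \<in> borel_measurable G" "integrable M Z"
  shows "AE x in M. real_cond_exp M F' Z x = real_cond_exp M F Z x"
proof -
  let ?g = "real_cond_exp M F Z"
  let ?R = "{A \<inter> B | A B. A \<in> sets F \<and> B \<in> sets H}"
  have F: "subalgebra M F" by (rule subalgebra_trans[OF G GF])
  interpret F: sigma_finite_subalgebra M F by (rule sigma_finite_subalgebra_of_subalgebra[OF F])
  interpret F': sigma_finite_subalgebra M F' by (rule sigma_finite_subalgebra_of_subalgebra[OF F'])
  have g: "integrable M ?g" "?g \<in> borel_measurable G"
    using F.real_cond_exp_int(1)[OF Z(2)] measurable_from_subalg[OF GF borel_measurable_cond_exp]
    by auto
  have FG: "A \<in> sets G" if "A \<in> sets F" for A using GF that by (auto simp: subalgebra_def)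
  have rect: "(\<integral>x\<in>A \<inter> B. Z x \<partial>M) = (\<integral>x\<in>A \<inter> B. ?g x \<partial>M)"
    if A: "A \<in> sets F" and B: "B \<in> sets H" for A B
    using F.real_cond_exp_intA[OF Z(2) A]
    unfolding set_integral_Int_indep[OF G H indep FG[OF A] B Z] set_integral_Int_indep[OF G H indep FG[OF A] B g(2,1)]
    by (simp add: set_lebesgue_integral_def)
  have stable: "Int_stable ?R"
  proof (rule Int_stableI)
    fix R1 R2 assume "R1 \<in> ?R" "R2 \<in> ?R"
    then obtain A1 B1 A2 B2 where "R1 = A1 \<inter> B1" "R2 = A2 \<inter> B2"
      "A1 \<in> sets F" "A2 \<in> sets F" "B1 \<in> sets H" "B2 \<in> sets H" by blast
    then show "R1 \<inter> R2 \<in> ?R"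
      by (intro CollectI exI[of _ "A1 \<inter> A2"] exI[of _ "B1 \<inter> B2"]) auto
  qed
  have RM: "?R \<subseteq> sets M" using F H by (auto simp: subalgebra_def)
  have total: "(\<integral>x. Z x \<partial>M) = (\<integral>x. ?g x \<partial>M)" using F.real_cond_exp_int(2)[OF Z(2)] by simp
  show ?thesis
  proof (rule F'.real_cond_exp_charact)
    fix A assume "A \<in> sets F'"
    then have "A \<in> sigma_sets (space M) ?R" using gen by blast
    then show "(\<integral>x\<in>A. Z x \<partial>M) = (\<integral>x\<in>A. ?g x \<partial>M)"
      by (rule set_integral_eq_on_sigma_sets[OF stable RM Z(2) g(1) total, rotated]) (use rect in blast)
  next
    show "?g \<in> borel_measurable F'" by (rule measurable_from_subalg[OF F'F borel_measurable_cond_exp])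
  qed (use Z g in auto)
qed

end

lemma hazard_nonneg_le_one:
  assumes "pmf (\<pi> l) 0 = 0" "\<And>k. Fsurv \<pi> l k > 0"
  shows "0 \<le> hazard \<pi> l k \<and> hazard \<pi> l k \<le> 1"
proof -
  have F: "Fsurv \<pi> l (k - 1) > 0" using assms(2) .
  have "pmf (\<pi> l) k \<le> Fsurv \<pi> l (k - 1)"
  proof (cases k)
    case 0 then show ?thesis using assms F by (simp add: less_imp_le)
  next
    case (Suc n)
    have "pmf (\<pi> l) k = measure_pmf.prob (\<pi> l) {k}" by (simp add: measure_pmf_single)
    also have "\<dots> \<le> measure_pmf.prob (\<pi> l) {n<..}" using Suc
      by (intro measure_pmf.finite_measure_mono) auto
    finally show ?thesis using Suc by (simp add: Fsurv_def)
  qed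
  then show ?thesis using F by (auto simp: hazard_def field_simps)
qed

lemma abs_Amat_le:
  assumes "\<And>l. pmf (\<pi> l) 0 = 0" "\<And>l k. Fsurv \<pi> l k > 0"
  shows "\<bar>Amat \<pi> p n m l\<bar> \<le> 1 + \<bar>p m l\<bar>"
proof -
  have hz: "0 \<le> hazard \<pi> l n" "hazard \<pi> l n \<le> 1" using hazard_nonneg_le_one[of \<pi> l n] assms by auto
  have "\<bar>p m l * hazard \<pi> l n\<bar> \<le> \<bar>p m l\<bar>"
    using hz by (simp add: abs_mult mult_left_le)
  then show ?thesis using hz by (auto simp: Amat_def)
qed

locale approx_hidden_model = prob_space M for M :: "'w measure" +
  fixes \<pi> :: "'i::finite \<Rightarrow> nat pmf" and p :: "'i \<Rightarrow> 'i \<Rightarrow> real" and c d :: "'i \<Rightarrow> real"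
    and p0 :: "'i \<Rightarrow> real"
    and y :: "nat \<Rightarrow> 'w \<Rightarrow> real" and h :: "nat \<Rightarrow> 'w \<Rightarrow> nat" and X :: "nat \<Rightarrow> 'w \<Rightarrow> 'i"
  assumes pi_support: "\<And>l. pmf (\<pi> l) 0 = 0"
    and F_pos: "\<And>l k. Fsurv \<pi> l k > 0"
    and d_pos: "\<And>l. d l > 0"
    and y_meas: "\<And>k. y k \<in> borel_measurable M"
    and y_indep: "indep_vars (\<lambda>_. borel) y UNIV"
    and y_normal: "\<And>k. distributed M lborel (y k) std_normal_density"
    and h_meas: "\<And>k. h k \<in> measurable (Yalg M y k) (count_space UNIV)"
    and X_meas: "\<And>k. X k \<in> measurable M (count_space UNIV)"
    and X_init: "\<And>l. AE w in M. real_cond_exp M (Yinf M y) (\<lambda>w. of_bool (X 0 w = l)) w = p0 l"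
    and X_trans: "\<And>k l m. AE w in M. X k w = l \<longrightarrow>
        real_cond_exp M (XYalg M X y k) (\<lambda>w. of_bool (X (Suc k) w = m)) w = Amat \<pi> p (h k w) m l"
begin

lemmas [measurable] = y_meas X_meas

definition "Ygen k = {y l -` B \<inter> space M | l B. l \<le> k \<and> B \<in> sets borel}"
definition "Ygen_all = {y l -` B \<inter> space M | l B. B \<in> sets borel}"
definition "Ygen_at n = {y n -` B \<inter> space M | B. B \<in> sets borel}"
definition "Xgen k = {X l -` B \<inter> space M | l B. l \<le> k}"

definition "history k = sigma (space M) (Xgen k \<union> Ygen k)"
definition "Yat n = sigma (space M) (Ygen_at n)"

lemma Yalg_eq: "Yalg M y k = sigma (space M) (Ygen k)"
  unfolding Yalg_def Ygen_def ..

lemma Yinf_eq: "Yinf M y = sigma (space M) Ygen_all"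
  unfolding Yinf_def Ygen_all_def ..

lemma XYalg_eq: "XYalg M X y k = sigma (space M) (Xgen k \<union> Ygen_all)"
  unfolding XYalg_def Xgen_def Ygen_all_def ..

lemma generators_sets: "Ygen k \<subseteq> events" "Ygen_all \<subseteq> events" "Ygen_at n \<subseteq> events" "Xgen k \<subseteq> events"
  unfolding Ygen_def Ygen_all_def Xgen_def Ygen_at_def by auto

lemma subalgebras:
  "subalgebra M (Yalg M y k)" "subalgebra M (Yinf M y)" "subalgebra M (XYalg M X y k)"
  "subalgebra M (history k)" "subalgebra M (Yat n)"
  unfolding Yalg_eq Yinf_eq XYalg_eq history_def Yat_def
  by (rule subalgebra_sigma_generated, insert generators_sets, blast)+

lemma spaces [simp]:
  "space (Yalg M y k) = space M" "space (Yinf M y) = space M" "space (XYalg M X y k) = space M"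
  "space (history k) = space M" "space (Yat n) = space M"
  using subalgebras unfolding subalgebra_def by auto

lemma Yalg_events: "B \<in> sets (Yalg M y k) \<Longrightarrow> B \<in> events"
  using subalgebras(1) by (auto simp: subalgebra_def)

lemma sets_Yalg: "sets (Yalg M y k) = sigma_sets (space M) (Ygen k)"
  unfolding Yalg_eq by (rule sets_sigma_generated[OF generators_sets(1)])

lemma sets_Yat: "sets (Yat n) = sigma_sets (space M) (Ygen_at n)"
  unfolding Yat_def by (rule sets_sigma_generated[OF generators_sets(3)])

lemma sets_history: "sets (history k) = sigma_sets (space M) (Xgen k \<union> Ygen k)"
  unfolding history_def by (rule sets_sigma_generated) (use generators_sets in blast)

lemma sigma_finite_Yalg: "sigma_finite_subalgebra M (Yalg M y k)"
  by (rule sigma_finite_subalgebra_of_subalgebra[OF subalgebras(1)])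

lemma sigma_finite_Yinf: "sigma_finite_subalgebra M (Yinf M y)"
  by (rule sigma_finite_subalgebra_of_subalgebra[OF subalgebras(2)])

lemma sigma_finite_XYalg: "sigma_finite_subalgebra M (XYalg M X y k)"
  by (rule sigma_finite_subalgebra_of_subalgebra[OF subalgebras(3)])

lemma subalgebra_Yalg_mono:
  assumes "k \<le> k'"
  shows "subalgebra (Yalg M y k') (Yalg M y k)"
proof -
  have "Ygen k \<subseteq> Ygen k'" using assms unfolding Ygen_def by fastforce
  then show ?thesis
    unfolding Yalg_eq using generators_sets by (intro subalgebra_sigma_generated_mono) (auto intro: sigma_sets.Basic)
qed

lemma subalgebra_Yinf_Yalg: "subalgebra (Yinf M y) (Yalg M y k)"
  unfolding Yalg_eq Yinf_eq using generators_sets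
  by (intro subalgebra_sigma_generated_mono) (auto simp: Ygen_def Ygen_all_def intro!: sigma_sets.Basic)

lemma subalgebra_XYalg_Yinf: "subalgebra (XYalg M X y k) (Yinf M y)"
  unfolding XYalg_eq Yinf_eq using generators_sets
  by (intro subalgebra_sigma_generated_mono) (auto simp: Ygen_all_def intro!: sigma_sets.Basic)

lemma subalgebra_XYalg_Yalg: "subalgebra (XYalg M X y k) (Yalg M y k')"
  unfolding XYalg_eq Yalg_eq using generators_sets
  by (intro subalgebra_sigma_generated_mono) (auto simp: Ygen_def Ygen_all_def intro!: sigma_sets.Basic)

lemma subalgebra_history_Yalg: "subalgebra (history k) (Yalg M y k)"
  unfolding Yalg_eq history_def using generators_sets
  by (intro subalgebra_sigma_generated_mono) (auto simp: Ygen_def intro!: sigma_sets.Basic)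

lemma subalgebra_XYalg_history: "subalgebra (XYalg M X y k) (history k)"
  unfolding XYalg_eq history_def using generators_sets
  by (intro subalgebra_sigma_generated_mono)
    (auto simp: Ygen_def Ygen_all_def Xgen_def intro!: sigma_sets.Basic)

lemma y_measurable_Yalg: "l \<le> k \<Longrightarrow> y l \<in> borel_measurable (Yalg M y k)"
  unfolding Yalg_eq using generators_sets by (intro measurable_sigma_generated) (auto simp: Ygen_def)

lemma y_measurable_Yinf: "y l \<in> borel_measurable (Yinf M y)"
  unfolding Yinf_eq using generators_sets by (intro measurable_sigma_generated) (auto simp: Ygen_all_def)

lemma y_measurable_XYalg: "y l \<in> borel_measurable (XYalg M X y k)"
  unfolding XYalg_eq using generators_sets by (intro measurable_sigma_generated) (auto simp: Ygen_all_def)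

lemma y_measurable_history: "l \<le> k \<Longrightarrow> y l \<in> borel_measurable (history k)"
  unfolding history_def using generators_sets by (intro measurable_sigma_generated) (auto simp: Ygen_def)

lemma y_measurable_Yat: "y n \<in> borel_measurable (Yat n)"
  unfolding Yat_def using generators_sets by (intro measurable_sigma_generated) (auto simp: Ygen_at_def)

lemma X_measurable_XYalg: "l \<le> k \<Longrightarrow> X l \<in> measurable (XYalg M X y k) (count_space UNIV)"
  unfolding XYalg_eq using generators_sets by (intro measurable_sigma_generated) (auto simp: Xgen_def)

lemma X_measurable_history: "l \<le> k \<Longrightarrow> X l \<in> measurable (history k) (count_space UNIV)"
  unfolding history_def using generators_sets by (intro measurable_sigma_generated) (auto simp: Xgen_def)

lemma h_measurable_Yalg: "l \<le> k \<Longrightarrow> h l \<in> measurable (Yalg M y k) (count_space UNIV)"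
  using measurable_from_subalg[OF subalgebra_Yalg_mono h_meas] .

lemma borel_measurable_of_bool_eq:
  "g \<in> measurable N (count_space UNIV) \<Longrightarrow> (\<lambda>w. of_bool (g w = a) :: real) \<in> borel_measurable N"
  by (rule borel_measurable_count_space_comp)

lemma Amat_h_measurable:
  "h l \<in> measurable N (count_space UNIV) \<Longrightarrow> (\<lambda>w. Amat \<pi> p (h l w) m m') \<in> borel_measurable N"
  by (rule borel_measurable_count_space_comp)

lemma borel_measurable_indicator_y:
  "C \<in> sets borel \<Longrightarrow> y n \<in> borel_measurable N \<Longrightarrow> (\<lambda>w. indicator C (y n w) :: real) \<in> borel_measurable N"
  by (rule measurable_compose[of "y n" N borel "indicator C"]) auto

definition "Amax = 1 + (\<Sum>m\<in>UNIV. \<Sum>l\<in>UNIV. \<bar>p m l\<bar>)"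

lemma Amax_nonneg: "0 \<le> Amax"
  unfolding Amax_def by (simp add: sum_nonneg add_nonneg_nonneg)

lemma abs_Amat_le_Amax: "\<bar>Amat \<pi> p n m l\<bar> \<le> Amax"
proof -
  have "\<bar>p m l\<bar> \<le> (\<Sum>l\<in>UNIV. \<bar>p m l\<bar>)" by (rule member_le_sum) auto
  also have "\<dots> \<le> (\<Sum>m\<in>UNIV. \<Sum>l\<in>UNIV. \<bar>p m l\<bar>)"
    by (rule member_le_sum[of m UNIV "\<lambda>m. \<Sum>l\<in>UNIV. \<bar>p m l\<bar>"]) (auto intro: sum_nonneg)
  finally show ?thesis using abs_Amat_le[of \<pi> p n m l] pi_support F_pos unfolding Amax_def by force
qed

lemma gam_nonneg: "0 \<le> gam c d m t"
  using d_pos[of m] by (simp add: gam_def)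

lemma gam_measurable [measurable]: "(\<lambda>t. gam c d m t) \<in> borel_measurable borel"
  unfolding gam_def by measurable

lemma std_normal_density_mult_gam: "std_normal_density t * gam c d m t = normal_density (c m) (d m) t"
proof -
  have "std_normal_density t > 0" by (simp add: normal_density_pos)
  then have "std_normal_density t * gam c d m t = std_normal_density ((t - c m) / d m) / d m"
    using d_pos[of m] by (simp add: gam_def field_simps)
  also have "\<dots> = normal_density (c m) (d m) t"
    using d_pos[of m] by (simp add: normal_density_def real_sqrt_mult power_divide field_simps)
  finally show ?thesis .
qed

lemma nn_integral_gam: "(\<integral>\<^sup>+w. ennreal (gam c d m (y l w)) \<partial>M) = 1"
proof -
  have "(\<integral>\<^sup>+w. ennreal (gam c d m (y l w)) \<partial>M)
      = (\<integral>\<^sup>+t. ennreal (std_normal_density t) * ennreal (gam c d m t) \<partial>lborel)"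
    by (rule distributed_nn_integral[OF y_normal, symmetric]) measurable
  also have "\<dots> = (\<integral>\<^sup>+t. ennreal (normal_density (c m) (d m) t) \<partial>lborel)"
    by (intro nn_integral_cong) (simp add: std_normal_density_mult_gam[symmetric] ennreal_mult gam_nonneg)
  also have "\<dots> = ennreal (\<integral>t. normal_density (c m) (d m) t \<partial>lborel)"
    using d_pos[of m] by (intro nn_integral_eq_integral) auto
  also have "\<dots> = 1" using d_pos[of m] by simp
  finally show ?thesis .
qed

text \<open>An integrable majorant of \<open>Lam c d X y n\<close> that does not depend on the path of \<open>X\<close>.\<close>

definition "Lam_dom n w = (\<Prod>l\<le>n. \<Sum>m\<in>UNIV. gam c d m (y l w))"

lemma Lam_dom_measurable [measurable]: "Lam_dom n \<in> borel_measurable M"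
  unfolding Lam_dom_def by measurable

lemma Lam_dom_nonneg: "0 \<le> Lam_dom n w"
  by (simp add: Lam_dom_def prod_nonneg sum_nonneg gam_nonneg)

lemma Lam_dom_integrable: "integrable M (Lam_dom n)"
proof (rule integrableI_nonneg)
  show "AE x in M. 0 \<le> Lam_dom n x" by (simp add: Lam_dom_nonneg)
  have indep: "indep_vars (\<lambda>_. borel) (\<lambda>l w. ennreal (\<Sum>m\<in>UNIV. gam c d m (y l w))) {..n}"
    using indep_vars_compose2[OF indep_vars_subset[OF y_indep, of "{..n}"],
        of "\<lambda>_ t. ennreal (\<Sum>m\<in>UNIV. gam c d m t)" "\<lambda>_. borel"]
    by simp
  have "(\<integral>\<^sup>+w. Lam_dom n w \<partial>M) = (\<integral>\<^sup>+w. (\<Prod>l\<le>n. ennreal (\<Sum>m\<in>UNIV. gam c d m (y l w))) \<partial>M)"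
    unfolding Lam_dom_def by (intro nn_integral_cong) (simp add: prod_ennreal sum_nonneg gam_nonneg)
  also have "\<dots> = (\<Prod>l\<le>n. \<integral>\<^sup>+w. (\<Sum>m\<in>UNIV. gam c d m (y l w)) \<partial>M)"
    using indep by (intro indep_vars_nn_integral) auto
  also have "\<dots> = (\<Prod>l\<le>n. of_nat CARD('i))"
  proof (rule prod.cong[OF refl])
    fix l
    have "(\<integral>\<^sup>+w. ennreal (\<Sum>m\<in>UNIV. gam c d m (y l w)) \<partial>M)
        = (\<integral>\<^sup>+w. (\<Sum>m\<in>UNIV. ennreal (gam c d m (y l w))) \<partial>M)"
      by (intro nn_integral_cong) (simp add: sum_ennreal gam_nonneg)
    also have "\<dots> = (\<Sum>m\<in>UNIV. \<integral>\<^sup>+w. ennreal (gam c d m (y l w)) \<partial>M)"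
      by (rule nn_integral_sum) measurable
    also have "\<dots> = of_nat CARD('i)" by (simp add: nn_integral_gam)
    finally show "(\<integral>\<^sup>+w. ennreal (\<Sum>m\<in>UNIV. gam c d m (y l w)) \<partial>M) = of_nat CARD('i)" .
  qed
  also have "\<dots> < \<infinity>"
    by (simp add: ennreal_of_nat_eq_real_of_nat ennreal_mult_less_top power_less_top_ennreal)
  finally show "(\<integral>\<^sup>+w. Lam_dom n w \<partial>M) < \<infinity>" .
qed simp

lemma integrable_Lam_dom_bounded:
  assumes "f \<in> borel_measurable M" "\<And>w. w \<in> space M \<Longrightarrow> \<bar>f w\<bar> \<le> C * Lam_dom n w"
  shows "integrable M f"
proof (rule Bochner_Integration.integrable_bound[OF integrable_mult_right[OF Lam_dom_integrable]])
  show "AE x in M. norm (f x) \<le> norm (C * Lam_dom n x)"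
    using assms(2) by (intro AE_I2) (force intro: order.trans[OF _ abs_ge_self])
qed fact

lemma gam_mult_Lam_dom_le: "gam c d m (y (Suc k) w) * Lam_dom k w \<le> Lam_dom (Suc k) w"
proof -
  have "gam c d m (y (Suc k) w) \<le> (\<Sum>m\<in>UNIV. gam c d m (y (Suc k) w))"
    by (rule member_le_sum) (auto simp: gam_nonneg)
  then have "gam c d m (y (Suc k) w) * Lam_dom k w \<le> (\<Sum>m\<in>UNIV. gam c d m (y (Suc k) w)) * Lam_dom k w"
    by (rule mult_right_mono[OF _ Lam_dom_nonneg])
  then show ?thesis by (simp add: Lam_dom_def mult.commute)
qed

lemma gam_comp_X_measurable:
  "X l \<in> measurable N (count_space UNIV) \<Longrightarrow> y l' \<in> borel_measurable N \<Longrightarrow>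
   (\<lambda>w. gam c d (X l w) (y l' w)) \<in> borel_measurable N"
proof -
  assume X: "X l \<in> measurable N (count_space UNIV)" and y: "y l' \<in> borel_measurable N"
  have "(\<lambda>w. gam c d (X l w) (y l' w)) = (\<lambda>w. \<Sum>m\<in>UNIV. of_bool (X l w = m) * gam c d m (y l' w))"
    by (simp add: sum.delta')
  also have "\<dots> \<in> borel_measurable N"
    using X y by (intro borel_measurable_sum borel_measurable_times borel_measurable_count_space_comp
        measurable_compose[OF y gam_measurable]) auto
  finally show ?thesis .
qed

lemma Lam_measurable:
  "(\<And>l. l \<le> k \<Longrightarrow> X l \<in> measurable N (count_space UNIV)) \<Longrightarrow>
   (\<And>l. l \<le> k \<Longrightarrow> y l \<in> borel_measurable N) \<Longrightarrow> Lam c d X y k \<in> borel_measurable N"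
  unfolding Lam_def[abs_def] by (intro borel_measurable_prod gam_comp_X_measurable) auto

lemma Lam_measurable_M [measurable]: "Lam c d X y k \<in> borel_measurable M"
  by (rule Lam_measurable) auto

lemma Lam_measurable_history: "Lam c d X y k \<in> borel_measurable (history k)"
  by (rule Lam_measurable) (auto intro: X_measurable_history y_measurable_history)

lemma Lam_nonneg: "0 \<le> Lam c d X y k w"
  by (simp add: Lam_def prod_nonneg gam_nonneg)

lemma Lam_le_Lam_dom: "Lam c d X y k w \<le> Lam_dom k w"
  unfolding Lam_def Lam_dom_def
  by (intro prod_mono conjI gam_nonneg member_le_sum[of "X _ w" UNIV "\<lambda>m. gam c d m (y _ w)"]) auto

lemma Lam_Suc: "Lam c d X y (Suc k) w = Lam c d X y k w * gam c d (X (Suc k) w) (y (Suc k) w)"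
  unfolding Lam_def by simp

section \<open>Conditional law of the path given the observations\<close>

definition "path_ind k x w = (\<Prod>l\<le>k. of_bool (X l w = x l) :: real)"
definition "path_weight k x w = p0 (x 0) * (\<Prod>l<k. Amat \<pi> p (h l w) (x (Suc l)) (x l))"

lemma path_ind_eq: "path_ind k x w = of_bool (\<forall>l\<le>k. X l w = x l)"
  unfolding path_ind_def by (induction k) (auto simp: le_Suc_eq)

lemma path_ind_Suc: "path_ind (Suc k) x w = path_ind k x w * of_bool (X (Suc k) w = x (Suc k))"
  unfolding path_ind_def by simp

lemma path_ind_measurable:
  "(\<And>l. l \<le> k \<Longrightarrow> X l \<in> measurable N (count_space UNIV)) \<Longrightarrow> path_ind k x \<in> borel_measurable N"
  unfolding path_ind_def[abs_def] by (intro borel_measurable_prod borel_measurable_count_space_comp) auto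

lemma path_ind_measurable_M [measurable]: "path_ind k x \<in> borel_measurable M"
  by (rule path_ind_measurable) auto

lemma path_ind_integrable: "integrable M (path_ind k x)"
  by (rule integrable_abs_bounded[where B=1]) (auto simp: path_ind_eq)

lemma path_weight_measurable_Yalg: "path_weight k x \<in> borel_measurable (Yalg M y k)"
  unfolding path_weight_def[abs_def]
  by (intro borel_measurable_times borel_measurable_const borel_measurable_prod Amat_h_measurable
      h_measurable_Yalg) auto

lemma path_weight_measurable_M [measurable]: "path_weight k x \<in> borel_measurable M"
  by (rule measurable_from_subalg[OF subalgebras(1) path_weight_measurable_Yalg])

lemma abs_path_weight_le: "\<bar>path_weight k x w\<bar> \<le> \<bar>p0 (x 0)\<bar> * Amax ^ k"
proof -
  have "\<bar>\<Prod>l<k. Amat \<pi> p (h l w) (x (Suc l)) (x l)\<bar> \<le> (\<Prod>l<k. Amax)"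
    unfolding abs_prod by (intro prod_mono) (auto simp: abs_Amat_le_Amax)
  then show ?thesis by (simp add: path_weight_def abs_mult mult_left_mono)
qed

lemma cond_exp_path_ind_Yinf:
  "AE w in M. real_cond_exp M (Yinf M y) (path_ind k x) w = path_weight k x w"
proof (induction k)
  case 0
  have "path_ind 0 x = (\<lambda>w. of_bool (X 0 w = x 0))" by (simp add: path_ind_def fun_eq_iff)
  then show ?case using X_init[of "x 0"] by (simp add: path_weight_def)
next
  case (Suc k)
  let ?XY = "XYalg M X y k" and ?Y = "Yinf M y"
  define A where "A w = Amat \<pi> p (h k w) (x (Suc k)) (x k)" for w
  define next_ind where "next_ind w = (of_bool (X (Suc k) w = x (Suc k)) :: real)" for w
  have [measurable]: "next_ind \<in> borel_measurable M"
    unfolding next_ind_def[abs_def] by (rule borel_measurable_count_space_comp) simp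
  have A_Yinf: "A \<in> borel_measurable ?Y"
    unfolding A_def[abs_def] by (intro Amat_h_measurable measurable_from_subalg[OF subalgebra_Yinf_Yalg h_meas])
  have [measurable]: "A \<in> borel_measurable M" by (rule measurable_from_subalg[OF subalgebras(2) A_Yinf])
  have split: "path_ind (Suc k) x = (\<lambda>w. path_ind k x w * next_ind w)"
    by (simp add: path_ind_Suc next_ind_def fun_eq_iff)
  have tower: "AE w in M. real_cond_exp M ?Y (real_cond_exp M ?XY (path_ind (Suc k) x)) w
      = real_cond_exp M ?Y (path_ind (Suc k) x) w"
    by (rule sigma_finite_subalgebra.real_cond_exp_nested_subalg[OF sigma_finite_Yinf subalgebras(3)
          subalgebra_XYalg_Yinf path_ind_integrable])
  have pull_out: "AE w in M. real_cond_exp M ?XY (\<lambda>w. path_ind k x w * next_ind w) w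
     = path_ind k x w * real_cond_exp M ?XY next_ind w"
    by (rule sigma_finite_subalgebra.real_cond_exp_mult[OF sigma_finite_XYalg])
      (auto intro!: path_ind_measurable X_measurable_XYalg simp: split[symmetric] path_ind_integrable)
  have step: "AE w in M. X k w = x k \<longrightarrow> real_cond_exp M ?XY next_ind w = A w"
    using X_trans[of k "x k" "x (Suc k)"] unfolding next_ind_def[abs_def] A_def .
  have "AE w in M. real_cond_exp M ?XY (path_ind (Suc k) x) w = A w * path_ind k x w"
    using pull_out step unfolding split by eventually_elim (auto simp: path_ind_eq)
  then have cong: "AE w in M. real_cond_exp M ?Y (real_cond_exp M ?XY (path_ind (Suc k) x)) w
      = real_cond_exp M ?Y (\<lambda>w. A w * path_ind k x w) w"
    by (rule sigma_finite_subalgebra.real_cond_exp_cong[OF sigma_finite_Yinf])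
      (simp_all add: measurable_from_subalg[OF subalgebras(3) borel_measurable_cond_exp])
  have A_out: "AE w in M. real_cond_exp M ?Y (\<lambda>w. A w * path_ind k x w) w
      = A w * real_cond_exp M ?Y (path_ind k x) w"
  proof (rule sigma_finite_subalgebra.real_cond_exp_mult[OF sigma_finite_Yinf A_Yinf])
    show "integrable M (\<lambda>w. A w * path_ind k x w)"
    proof (rule integrable_abs_bounded[where B=Amax])
      show "\<bar>A w * path_ind k x w\<bar> \<le> Amax" for w
        by (auto simp: A_def abs_mult path_ind_eq intro: order.trans[OF _ abs_Amat_le_Amax])
    qed measurable
  qed simp
  show ?case using tower cong A_out Suc
    by eventually_elim (simp add: path_weight_def A_def)
qed

lemma integral_path_ind_Yinf:
  assumes R: "R \<in> borel_measurable (Yinf M y)" "\<And>w. w \<in> space M \<Longrightarrow> \<bar>R w\<bar> \<le> 1"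
  shows "(\<integral>w. R w * path_ind k x w \<partial>M) = (\<integral>w. R w * path_weight k x w \<partial>M)"
proof -
  have [measurable]: "R \<in> borel_measurable M" by (rule measurable_from_subalg[OF subalgebras(2) R(1)])
  have int: "integrable M (\<lambda>w. R w * path_ind k x w)"
    by (rule integrable_abs_bounded[where B=1]) (auto simp: path_ind_eq R(2) abs_mult)
  have "(\<integral>w. R w * path_ind k x w \<partial>M) = (\<integral>w. R w * real_cond_exp M (Yinf M y) (path_ind k x) w \<partial>M)"
    by (rule sigma_finite_subalgebra.real_cond_exp_intg(2)[OF sigma_finite_Yinf int R(1), symmetric]) simp
  also have "\<dots> = (\<integral>w. R w * path_weight k x w \<partial>M)"
    by (rule Bochner_Integration.integral_cong_AE)
      (use cond_exp_path_ind_Yinf[of k x] in \<open>auto elim!: eventually_mono\<close>)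
  finally show ?thesis .
qed

lemma sets_X_rect [measurable]: "{w\<in>space M. \<forall>l\<le>k. X l w \<in> S l} \<in> events"
proof -
  have "{w\<in>space M. \<forall>l\<le>k. X l w \<in> S l} = space M \<inter> (\<Inter>l\<in>{..k}. X l -` S l \<inter> space M)" by auto
  also have "\<dots> \<in> events" by (intro sets.Int sets.finite_INT ballI measurable_sets[OF X_meas]) auto
  finally show ?thesis .
qed

lemma indicator_X_rect_eq_sum:
  "of_bool (\<forall>l\<le>k. X l w \<in> S l) = (\<Sum>x\<in>PiE {..k} S. path_ind k x w)"
proof -
  let ?r = "restrict (\<lambda>l. X l w) {..k}"
  have "(\<Sum>x\<in>PiE {..k} S. path_ind k x w) = (\<Sum>x\<in>PiE {..k} S. if x = ?r then 1 else 0)"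
  proof (rule sum.cong[OF refl])
    fix x assume x: "x \<in> PiE {..k} S"
    have "(\<forall>l\<le>k. X l w = x l) \<longleftrightarrow> x = ?r"
    proof
      assume "\<forall>l\<le>k. X l w = x l"
      then show "x = ?r" using x by (intro extensionalityI[of _ "{..k}"]) (auto simp: PiE_def)
    qed auto
    then show "path_ind k x w = (if x = ?r then 1 else 0)" by (simp add: path_ind_eq)
  qed
  also have "\<dots> = (if ?r \<in> PiE {..k} S then 1 else 0)"
    by (rule sum.delta) (rule finite_PiE, auto)
  also have "\<dots> = of_bool (\<forall>l\<le>k. X l w \<in> S l)" by (auto simp: PiE_def Pi_def)
  finally show ?thesis ..
qed

lemma indep_Yalg_Yat: "indep_set (sets (Yalg M y k)) (sets (Yat (Suc k)))"
proof -
  let ?E = "\<lambda>i. {y i -` A \<inter> space M | A. A \<in> sets borel}"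
  have indep: "indep_sets ?E UNIV" using y_indep unfolding indep_vars_def2 by simp
  have "indep_sets (\<lambda>b. sigma_sets (space M) (\<Union>i\<in>case_bool {..k} {Suc k} b. ?E i)) UNIV"
  proof (rule indep_sets_collect_sigma)
    show "indep_sets ?E (\<Union>b\<in>UNIV. case_bool {..k} {Suc k} b)"
      by (rule indep_sets_mono_index[OF _ indep]) auto
    show "Int_stable (?E i)" for i
    proof (safe intro!: Int_stableI)
      fix A B :: "real set" assume "A \<in> sets borel" "B \<in> sets borel"
      then show "\<exists>C. (y i -` A \<inter> space M) \<inter> (y i -` B \<inter> space M) = (y i -` C \<inter> space M) \<and> C \<in> sets borel"
        by (intro exI[of _ "A \<inter> B"]) auto
    qed
    show "disjoint_family_on (case_bool {..k} {Suc k}) UNIV"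
      by (auto simp: disjoint_family_on_def split: bool.split)
  qed
  then have "indep_set (sigma_sets (space M) (\<Union>i\<in>{..k}. ?E i)) (sigma_sets (space M) (\<Union>i\<in>{Suc k}. ?E i))"
    unfolding indep_set_def by (rule indep_sets_mono_sets) (auto split: bool.split)
  moreover have "(\<Union>i\<in>{..k}. ?E i) = Ygen k" by (auto simp: Ygen_def)
  moreover have "(\<Union>i\<in>{Suc k}. ?E i) = Ygen_at (Suc k)" by (auto simp: Ygen_at_def)
  ultimately show ?thesis by (simp add: sets_Yalg sets_Yat)
qed

lemma prob_X_rect_Yalg_Yat:
  assumes B: "B \<in> sets (Yalg M y k)" and C: "C \<in> sets borel"
  shows "prob ({w\<in>space M. \<forall>l\<le>k. X l w \<in> S l} \<inter> B \<inter> (y (Suc k) -` C \<inter> space M))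
     = (\<Sum>x\<in>PiE {..k} S. \<integral>w. indicator B w * path_weight k x w \<partial>M) * prob (y (Suc k) -` C \<inter> space M)"
proof -
  let ?Q = "PiE {..k} S"
  let ?E = "{w\<in>space M. \<forall>l\<le>k. X l w \<in> S l} \<inter> B \<inter> (y (Suc k) -` C \<inter> space M)"
  let ?C = "\<lambda>w. indicator C (y (Suc k) w) :: real"
  have B_Yalg: "indicator B \<in> borel_measurable (Yalg M y k)" using B by simp
  have B_Yinf: "indicator B \<in> borel_measurable (Yinf M y)"
    by (rule measurable_from_subalg[OF subalgebra_Yinf_Yalg B_Yalg])
  have [measurable]: "B \<in> events" by (rule Yalg_events[OF B])
  have [measurable]: "C \<in> sets borel" by fact
  have C_Yinf: "?C \<in> borel_measurable (Yinf M y)" by (rule borel_measurable_indicator_y[OF C y_measurable_Yinf])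
  have C_Yat: "?C \<in> borel_measurable (Yat (Suc k))" by (rule borel_measurable_indicator_y[OF C y_measurable_Yat])
  have "prob ?E = (\<integral>w. indicator ?E w \<partial>M)" by simp
  also have "\<dots> = (\<integral>w. (\<Sum>x\<in>?Q. (indicator B w * ?C w) * path_ind k x w) \<partial>M)"
    by (rule Bochner_Integration.integral_cong[OF refl])
      (auto simp: sum_distrib_left[symmetric] indicator_X_rect_eq_sum[symmetric] indicator_def)
  also have "\<dots> = (\<Sum>x\<in>?Q. \<integral>w. (indicator B w * ?C w) * path_ind k x w \<partial>M)"
    by (rule Bochner_Integration.integral_sum)
      (rule integrable_abs_bounded[where B=1], measurable, auto simp: path_ind_eq indicator_def)
  also have "\<dots> = (\<Sum>x\<in>?Q. \<integral>w. (indicator B w * ?C w) * path_weight k x w \<partial>M)"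
    by (intro sum.cong refl integral_path_ind_Yinf borel_measurable_times B_Yinf C_Yinf)
      (auto simp: indicator_def)
  also have "\<dots> = (\<Sum>x\<in>?Q. \<integral>w. (indicator B w * path_weight k x w) * ?C w \<partial>M)"
    by (simp add: ac_simps)
  also have "\<dots> = (\<Sum>x\<in>?Q. (\<integral>w. indicator B w * path_weight k x w \<partial>M) * (\<integral>w. ?C w \<partial>M))"
  proof (rule sum.cong[OF refl], rule integral_mult_indep_subalgebras[OF subalgebras(1) subalgebras(5) indep_Yalg_Yat])
    fix x
    show "(\<lambda>w. indicator B w * path_weight k x w) \<in> borel_measurable (Yalg M y k)"
      using B_Yalg path_weight_measurable_Yalg by (rule borel_measurable_times)
    show "integrable M (\<lambda>w. indicator B w * path_weight k x w)"
      by (rule integrable_abs_bounded[where B="\<bar>p0 (x 0)\<bar> * Amax ^ k"])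
        (auto intro: measurable_from_subalg[OF subalgebras(1)] borel_measurable_times B_Yalg
          path_weight_measurable_Yalg simp: indicator_def abs_path_weight_le Amax_nonneg)
    show "integrable M ?C"
      by (rule integrable_abs_bounded[where B=1]) (auto intro: borel_measurable_indicator_y[OF C y_meas]
          simp: indicator_def)
  qed (rule C_Yat)
  also have "(\<integral>w. ?C w \<partial>M) = prob (y (Suc k) -` C \<inter> space M)"
  proof -
    have "(\<integral>w. ?C w \<partial>M) = (\<integral>w. indicator (y (Suc k) -` C \<inter> space M) w \<partial>M :: real)"
      by (rule Bochner_Integration.integral_cong) (auto simp: indicator_def)
    then show ?thesis by simp
  qed
  finally show ?thesis by (simp add: sum_distrib_right)
qed

definition "history_rects k = {{w\<in>space M. \<forall>l\<le>k. X l w \<in> S l} \<inter> B | S B. B \<in> sets (Yalg M y k)}"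

lemma history_rects_events: "history_rects k \<subseteq> events"
proof
  fix a assume "a \<in> history_rects k"
  then obtain S B where a: "a = {w\<in>space M. \<forall>l\<le>k. X l w \<in> S l} \<inter> B" and B: "B \<in> sets (Yalg M y k)"
    unfolding history_rects_def mem_Collect_eq by (elim exE conjE)
  show "a \<in> events" unfolding a by (rule sets.Int[OF sets_X_rect Yalg_events[OF B]])
qed

lemma Int_stable_history_rects: "Int_stable (history_rects k)"
proof (rule Int_stableI)
  fix a b assume "a \<in> history_rects k" "b \<in> history_rects k"
  then obtain S1 B1 S2 B2 where ab: "a = {w\<in>space M. \<forall>l\<le>k. X l w \<in> S1 l} \<inter> B1" "B1 \<in> sets (Yalg M y k)"
    "b = {w\<in>space M. \<forall>l\<le>k. X l w \<in> S2 l} \<inter> B2" "B2 \<in> sets (Yalg M y k)"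
    unfolding history_rects_def mem_Collect_eq by (elim exE conjE)
  have "a \<inter> b = {w\<in>space M. \<forall>l\<le>k. X l w \<in> S1 l \<inter> S2 l} \<inter> (B1 \<inter> B2)" using ab by auto
  moreover have "B1 \<inter> B2 \<in> sets (Yalg M y k)" using ab by auto
  ultimately show "a \<inter> b \<in> history_rects k" unfolding history_rects_def
    by (intro CollectI exI[of _ "\<lambda>l. S1 l \<inter> S2 l"] exI[of _ "B1 \<inter> B2"] conjI)
qed

lemma Int_stable_Ygen_at: "Int_stable (Ygen_at n)"
proof (rule Int_stableI)
  fix a b assume "a \<in> Ygen_at n" "b \<in> Ygen_at n"
  then obtain A B :: "real set" where "A \<in> sets borel" "B \<in> sets borel"
    "a = y n -` A \<inter> space M" "b = y n -` B \<inter> space M"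
    unfolding Ygen_at_def mem_Collect_eq by (elim exE conjE)
  then show "a \<inter> b \<in> Ygen_at n" unfolding Ygen_at_def by (intro CollectI exI[of _ "A \<inter> B"]) auto
qed

lemma sets_history_subset_history_rects: "sets (history k) \<subseteq> sigma_sets (space M) (history_rects k)"
  unfolding sets_history
proof (rule sigma_sets_mono, rule subsetI)
  have space_Yalg: "space M \<in> sets (Yalg M y k)" by (metis sets.top spaces(1))
  fix E assume "E \<in> Xgen k \<union> Ygen k"
  then have "E \<in> history_rects k"
  proof
    assume "E \<in> Xgen k"
    then obtain l B where E: "E = X l -` B \<inter> space M" "l \<le> k"
      unfolding Xgen_def mem_Collect_eq by (elim exE conjE)
    then have "E = {w\<in>space M. \<forall>l'\<le>k. X l' w \<in> (\<lambda>l'. if l' = l then B else UNIV) l'} \<inter> space M"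
      by auto
    then show "E \<in> history_rects k" unfolding history_rects_def using space_Yalg
      by (intro CollectI exI[of _ "\<lambda>l'. if l' = l then B else UNIV"] exI[of _ "space M"] conjI)
  next
    assume "E \<in> Ygen k"
    then have EY: "E \<in> sets (Yalg M y k)" unfolding sets_Yalg by auto
    then have "E = {w\<in>space M. \<forall>l'\<le>k. X l' w \<in> (\<lambda>_. UNIV) l'} \<inter> E"
      using sets.sets_into_space[OF Yalg_events[OF EY]] by auto
    then show "E \<in> history_rects k" unfolding history_rects_def using EY
      by (intro CollectI exI[of _ "\<lambda>_. UNIV"] exI[of _ E] conjI)
  qed
  then show "E \<in> sigma_sets (space M) (history_rects k)" by auto
qed

lemma indep_history_rects_Ygen_at: "indep_set (history_rects k) (Ygen_at (Suc k))"
proof (rule indep_setI[OF history_rects_events generators_sets(3)])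
  fix a b assume "a \<in> history_rects k" "b \<in> Ygen_at (Suc k)"
  then obtain S B C where a: "a = {w\<in>space M. \<forall>l\<le>k. X l w \<in> S l} \<inter> B" and B: "B \<in> sets (Yalg M y k)"
    and b: "b = y (Suc k) -` C \<inter> space M" and C: "C \<in> sets borel"
    unfolding history_rects_def Ygen_at_def mem_Collect_eq by (elim exE conjE)
  have "a = {w\<in>space M. \<forall>l\<le>k. X l w \<in> S l} \<inter> B \<inter> (y (Suc k) -` UNIV \<inter> space M)"
    unfolding a by blast
  also have "prob \<dots> = (\<Sum>x\<in>PiE {..k} S. \<integral>w. indicator B w * path_weight k x w \<partial>M)
      * prob (y (Suc k) -` UNIV \<inter> space M)"
    by (rule prob_X_rect_Yalg_Yat[OF B]) simp
  finally have "prob a = (\<Sum>x\<in>PiE {..k} S. \<integral>w. indicator B w * path_weight k x w \<partial>M)"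
    by (simp add: prob_space)
  then show "prob (a \<inter> b) = prob a * prob b"
    using prob_X_rect_Yalg_Yat[OF B C, of S] a b by (simp add: Int_assoc)
qed

lemma indep_history_Yat: "indep_set (sets (history k)) (sets (Yat (Suc k)))"
proof -
  have "indep_set (sigma_sets (space M) (history_rects k)) (sigma_sets (space M) (Ygen_at (Suc k)))"
    by (rule indep_set_sigma_sets[OF indep_history_rects_Ygen_at Int_stable_history_rects Int_stable_Ygen_at])
  then show ?thesis
    unfolding indep_set_def sets_Yat
    by (rule indep_sets_mono_sets) (use sets_history_subset_history_rects in \<open>auto split: bool.split\<close>)
qed

lemma cond_exp_Yalg_Suc_history:
  assumes "Z \<in> borel_measurable (history k)" "integrable M Z"
  shows "AE w in M. real_cond_exp M (Yalg M y (Suc k)) Z w = real_cond_exp M (Yalg M y k) Z w"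
proof (rule real_cond_exp_indep_enlarge[OF subalgebras(4) subalgebra_history_Yalg subalgebras(5)
      indep_history_Yat subalgebras(1) subalgebra_Yalg_mono _ assms])
  let ?R = "{A \<inter> B | A B. A \<in> sets (Yalg M y k) \<and> B \<in> sets (Yat (Suc k))}"
  have space_Yalg: "space M \<in> sets (Yalg M y k)" and space_Yat: "space M \<in> sets (Yat (Suc k))"
    by (metis sets.top spaces(1), metis sets.top spaces(5))
  show "sets (Yalg M y (Suc k)) \<subseteq> sigma_sets (space M) ?R"
    unfolding sets_Yalg[of "Suc k"]
  proof (rule sigma_sets_mono, rule subsetI)
    fix E assume "E \<in> Ygen (Suc k)"
    then obtain l B where E: "E = y l -` B \<inter> space M" "l \<le> Suc k" "B \<in> sets borel"
      unfolding Ygen_def mem_Collect_eq by (elim exE conjE)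
    have "E \<in> ?R"
    proof (cases "l = Suc k")
      case True
      then have "E \<in> Ygen_at (Suc k)" unfolding Ygen_at_def using E by blast
      then have "E \<in> sets (Yat (Suc k))" unfolding sets_Yat by blast
      moreover have "E = space M \<inter> E" using E by blast
      ultimately show ?thesis using space_Yalg by (intro CollectI exI[of _ "space M"] exI[of _ E]) simp
    next
      case False
      then have "E \<in> sets (Yalg M y k)" unfolding sets_Yalg Ygen_def using E by fastforce
      moreover have "E = E \<inter> space M" using E by blast
      ultimately show ?thesis using space_Yat by (intro CollectI exI[of _ E] exI[of _ "space M"]) simp
    qed
    then show "E \<in> sigma_sets (space M) ?R" by auto
  qed
qed simp

section \<open>One filtering step\<close>

lemma cond_exp_Yalg_Suc_sum_mult:
  fixes B V :: "'i \<Rightarrow> 'w \<Rightarrow> real"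
  assumes B: "\<And>l. B l \<in> borel_measurable (Yalg M y (Suc k))"
    and V: "\<And>l. V l \<in> borel_measurable (history k)" "\<And>l. integrable M (V l)"
    and BV: "\<And>l. integrable M (\<lambda>w. B l w * V l w)"
  shows "AE w in M. real_cond_exp M (Yalg M y (Suc k)) (\<lambda>w. \<Sum>l\<in>UNIV. B l w * V l w) w
     = (\<Sum>l\<in>UNIV. B l w * real_cond_exp M (Yalg M y k) (V l) w)"
proof -
  interpret Y1: sigma_finite_subalgebra M "Yalg M y (Suc k)" by (rule sigma_finite_Yalg)
  have [measurable]: "V l \<in> borel_measurable M" for l by (rule measurable_from_subalg[OF subalgebras(4) V(1)])
  have sum: "AE w in M. real_cond_exp M (Yalg M y (Suc k)) (\<lambda>w. \<Sum>l\<in>UNIV. B l w * V l w) w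
      = (\<Sum>l\<in>UNIV. real_cond_exp M (Yalg M y (Suc k)) (\<lambda>w. B l w * V l w) w)"
    by (rule Y1.real_cond_exp_sum[OF BV])
  have pull_out: "AE w in M. \<forall>l. real_cond_exp M (Yalg M y (Suc k)) (\<lambda>w. B l w * V l w) w
      = B l w * real_cond_exp M (Yalg M y (Suc k)) (V l) w"
    unfolding AE_all_countable by (intro allI Y1.real_cond_exp_mult B BV) simp
  have drop_y: "AE w in M. \<forall>l. real_cond_exp M (Yalg M y (Suc k)) (V l) w = real_cond_exp M (Yalg M y k) (V l) w"
    unfolding AE_all_countable by (intro allI cond_exp_Yalg_Suc_history V)
  show ?thesis using sum pull_out drop_y by eventually_elim simp
qed

lemma cond_exp_XYalg_mult_next_state:
  assumes U: "U \<in> borel_measurable (XYalg M X y k)"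
    and U_int: "integrable M (\<lambda>w. U w * of_bool (X (Suc k) w = m))"
  shows "AE w in M. real_cond_exp M (XYalg M X y k) (\<lambda>w. U w * of_bool (X (Suc k) w = m)) w
     = U w * Amat \<pi> p (h k w) m (X k w)"
proof -
  have "AE w in M. \<forall>l. X k w = l \<longrightarrow>
      real_cond_exp M (XYalg M X y k) (\<lambda>w. of_bool (X (Suc k) w = m)) w = Amat \<pi> p (h k w) m l"
    unfolding AE_all_countable using X_trans[of k _ m] by blast
  moreover have "AE w in M. real_cond_exp M (XYalg M X y k) (\<lambda>w. U w * of_bool (X (Suc k) w = m)) w
      = U w * real_cond_exp M (XYalg M X y k) (\<lambda>w. of_bool (X (Suc k) w = m)) w"
    by (rule sigma_finite_subalgebra.real_cond_exp_mult[OF sigma_finite_XYalg U _ U_int])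
      (rule borel_measurable_of_bool_eq, simp)
  ultimately show ?thesis by eventually_elim simp
qed

lemma abs_gam_mult_le_Lam_dom:
  assumes "\<bar>W w\<bar> \<le> C * Lam_dom k w"
  shows "\<bar>gam c d m (y (Suc k) w) * W w\<bar> \<le> \<bar>C\<bar> * Lam_dom (Suc k) w"
proof -
  have W_le: "\<bar>W w\<bar> \<le> \<bar>C\<bar> * Lam_dom k w"
    using assms Lam_dom_nonneg[of k w] abs_ge_self[of C] by (auto intro: order.trans mult_right_mono)
  have "\<bar>gam c d m (y (Suc k) w) * W w\<bar> = gam c d m (y (Suc k) w) * \<bar>W w\<bar>"
    by (simp add: abs_mult gam_nonneg)
  also have "\<dots> \<le> gam c d m (y (Suc k) w) * (\<bar>C\<bar> * Lam_dom k w)"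
    by (rule mult_left_mono[OF W_le gam_nonneg])
  also have "\<dots> = \<bar>C\<bar> * (gam c d m (y (Suc k) w) * Lam_dom k w)" by (simp add: ac_simps)
  also have "\<dots> \<le> \<bar>C\<bar> * Lam_dom (Suc k) w" by (intro mult_left_mono gam_mult_Lam_dom_le) simp
  finally show ?thesis .
qed

lemma cond_exp_step:
  fixes W :: "'w \<Rightarrow> real"
  assumes W: "W \<in> borel_measurable (history k)" and W_le: "\<And>w. \<bar>W w\<bar> \<le> C * Lam_dom k w"
  shows "AE w in M. real_cond_exp M (Yalg M y (Suc k))
           (\<lambda>w. gam c d m (y (Suc k) w) * W w * of_bool (X (Suc k) w = m)) w
         = gam c d m (y (Suc k) w) * (\<Sum>l\<in>UNIV. Amat \<pi> p (h k w) m l *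
             real_cond_exp M (Yalg M y k) (\<lambda>w. W w * of_bool (X k w = l)) w)"
proof -
  let ?Y1 = "Yalg M y (Suc k)" and ?Yk = "Yalg M y k" and ?XY = "XYalg M X y k"
  define g where "g w = gam c d m (y (Suc k) w)" for w
  define A where "A l w = Amat \<pi> p (h k w) m l" for l w
  define V where "V l w = W w * of_bool (X k w = l)" for l w
  define f where "f w = g w * W w * of_bool (X (Suc k) w = m)" for w
  interpret Y1: sigma_finite_subalgebra M ?Y1 by (rule sigma_finite_Yalg)
  have g_Y1: "g \<in> borel_measurable ?Y1"
    unfolding g_def[abs_def] by (rule measurable_compose[OF y_measurable_Yalg gam_measurable]) simp
  have A_Y1: "A l \<in> borel_measurable ?Y1" for l
    unfolding A_def[abs_def] by (intro Amat_h_measurable h_measurable_Yalg) simp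
  have V_history: "V l \<in> borel_measurable (history k)" for l
    unfolding V_def[abs_def] using W
    by (intro borel_measurable_times borel_measurable_of_bool_eq X_measurable_history) auto
  have [measurable]: "W \<in> borel_measurable M" "g \<in> borel_measurable M"
    "A l \<in> borel_measurable M" "V l \<in> borel_measurable M" for l
    using measurable_from_subalg[OF subalgebras(4) W] measurable_from_subalg[OF subalgebras(1) g_Y1]
      measurable_from_subalg[OF subalgebras(1) A_Y1] measurable_from_subalg[OF subalgebras(4) V_history]
    by auto
  have gW_le: "\<bar>g w * W w\<bar> \<le> \<bar>C\<bar> * Lam_dom (Suc k) w" for w
    unfolding g_def by (rule abs_gam_mult_le_Lam_dom[OF W_le])
  have f_int: "integrable M f"
  proof (rule integrable_Lam_dom_bounded[where C="\<bar>C\<bar>" and n="Suc k"])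
    show "\<bar>f w\<bar> \<le> \<bar>C\<bar> * Lam_dom (Suc k) w" for w
      using gW_le[of w] by (cases "X (Suc k) w = m") (auto simp: f_def)
  qed (unfold f_def[abs_def], measurable)
  have gAV_int: "integrable M (\<lambda>w. g w * A l w * V l w)" for l
  proof (rule integrable_Lam_dom_bounded[where C="Amax * \<bar>C\<bar>" and n="Suc k"])
    fix w
    have "\<bar>g w * A l w * V l w\<bar> \<le> \<bar>A l w\<bar> * \<bar>g w * W w\<bar>"
      by (simp add: V_def abs_mult mult_left_le)
    also have "\<dots> \<le> Amax * (\<bar>C\<bar> * Lam_dom (Suc k) w)"
      by (rule mult_mono[OF _ gW_le Amax_nonneg]) (simp_all add: A_def abs_Amat_le_Amax)
    finally show "\<bar>g w * A l w * V l w\<bar> \<le> (Amax * \<bar>C\<bar>) * Lam_dom (Suc k) w" by simp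
  qed simp
  have V_int: "integrable M (V l)" for l
    by (rule integrable_Lam_dom_bounded[where C=C and n=k]) (use W_le in \<open>auto simp: V_def abs_mult
        intro: order.trans[OF _ W_le]\<close>)
  have XY_step: "AE w in M. real_cond_exp M ?XY f w = (\<Sum>l\<in>UNIV. g w * A l w * V l w)"
  proof -
    have "(\<Sum>l\<in>UNIV. g w * A l w * V l w) = g w * W w * A (X k w) w" for w
    proof -
      have "(\<Sum>l\<in>UNIV. g w * A l w * V l w) = (\<Sum>l\<in>UNIV. if l = X k w then g w * W w * A l w else 0)"
        by (intro sum.cong) (auto simp: V_def)
      then show ?thesis by (simp add: sum.delta)
    qed
    moreover have "(\<lambda>w. g w * W w) \<in> borel_measurable ?XY"
      unfolding g_def using measurable_from_subalg[OF subalgebra_XYalg_history W]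
      by (intro borel_measurable_times measurable_compose[OF y_measurable_XYalg gam_measurable])
    ultimately show ?thesis
      using cond_exp_XYalg_mult_next_state[of "\<lambda>w. g w * W w"] f_int
      by (simp add: f_def[abs_def] A_def)
  qed
  have tower: "AE w in M. real_cond_exp M ?Y1 (real_cond_exp M ?XY f) w = real_cond_exp M ?Y1 f w"
    by (rule Y1.real_cond_exp_nested_subalg[OF subalgebras(3) subalgebra_XYalg_Yalg f_int])
  have cong: "AE w in M. real_cond_exp M ?Y1 (real_cond_exp M ?XY f) w
      = real_cond_exp M ?Y1 (\<lambda>w. \<Sum>l\<in>UNIV. g w * A l w * V l w) w"
    by (rule Y1.real_cond_exp_cong[OF XY_step])
      (simp_all add: measurable_from_subalg[OF subalgebras(3) borel_measurable_cond_exp])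
  have "AE w in M. real_cond_exp M ?Y1 (\<lambda>w. \<Sum>l\<in>UNIV. g w * A l w * V l w) w
      = (\<Sum>l\<in>UNIV. g w * A l w * real_cond_exp M ?Yk (V l) w)"
    by (rule cond_exp_Yalg_Suc_sum_mult[OF _ V_history V_int gAV_int])
      (intro borel_measurable_times g_Y1 A_Y1)
  with tower cong
  have "AE w in M. real_cond_exp M ?Y1 f w = g w * (\<Sum>l\<in>UNIV. A l w * real_cond_exp M ?Yk (V l) w)"
    by eventually_elim (simp add: sum_distrib_left mult.assoc)
  then show ?thesis by (simp add: f_def[abs_def] g_def A_def V_def[abs_def])
qed

section \<open>Filtering the number of jumps\<close>

lemma sum_of_bool_eq_mult: "(\<Sum>l\<in>UNIV. of_bool (l = a) * u l) = (u (a :: 'i) :: real)"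
proof -
  have "(\<Sum>l\<in>UNIV. of_bool (l = a) * u l) = (\<Sum>l\<in>UNIV. if l = a then u l else 0)"
    by (intro sum.cong) auto
  then show ?thesis by (simp add: sum.delta)
qed

lemma Njump_nonneg: "0 \<le> Njump X i j k w"
  unfolding Njump_def by (rule sum_nonneg) auto

lemma Njump_le: "Njump X i j k w \<le> real k"
proof -
  have "Njump X i j k w \<le> of_nat (card {1..k}) * 1"
    unfolding Njump_def by (rule sum_bounded_above) auto
  then show ?thesis by simp
qed

lemma Njump_Suc:
  "Njump X i j (Suc k) w = Njump X i j k w + of_bool (X k w = i) * of_bool (X (Suc k) w = j)"
  unfolding Njump_def by (simp add: sum.cl_ivl_Suc)

lemma Njump_measurable:
  "(\<And>l. l \<le> k \<Longrightarrow> X l \<in> measurable N (count_space UNIV)) \<Longrightarrow> Njump X i j k \<in> borel_measurable N"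
  unfolding Njump_def[abs_def]
  by (intro borel_measurable_sum borel_measurable_times borel_measurable_count_space_comp) auto

lemma cond_exp_Lam_Njump_plus_state:
  "AE w in M. real_cond_exp M (Yalg M y k)
       (\<lambda>w. Lam c d X y k w * (Njump X i j k w + r * of_bool (X k w = i)) * of_bool (X k w = l)) w
     = sigmaNX M c d X y i j k l w + r * of_bool (l = i) * qfilt M c d X y k i w"
proof -
  interpret Yk: sigma_finite_subalgebra M "Yalg M y k" by (rule sigma_finite_Yalg)
  define s where "s = r * of_bool (l = i)"
  have [measurable]: "Njump X i j k \<in> borel_measurable M" by (rule Njump_measurable) simp
  have N_int: "integrable M (\<lambda>w. Lam c d X y k w * Njump X i j k w * of_bool (X k w = l))"
  proof (rule integrable_Lam_dom_bounded)
    show "\<bar>Lam c d X y k w * Njump X i j k w * of_bool (X k w = l)\<bar> \<le> real k * Lam_dom k w" for w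
      using Lam_nonneg[of k w] Lam_le_Lam_dom[of k w] Njump_nonneg[of i j k w] Njump_le[of i j k w]
      by (auto simp: abs_mult mult.commute intro: mult_mono)
  qed simp
  have q_int: "integrable M (\<lambda>w. Lam c d X y k w * of_bool (X k w = i))"
  proof (rule integrable_Lam_dom_bounded)
    show "\<bar>Lam c d X y k w * of_bool (X k w = i)\<bar> \<le> 1 * Lam_dom k w" for w
      using Lam_nonneg[of k w] Lam_le_Lam_dom[of k w] by simp
  qed simp
  have "(\<lambda>w. Lam c d X y k w * (Njump X i j k w + r * of_bool (X k w = i)) * of_bool (X k w = l))
      = (\<lambda>w. Lam c d X y k w * Njump X i j k w * of_bool (X k w = l)
          + s * (Lam c d X y k w * of_bool (X k w = i)))"
    by (auto simp: fun_eq_iff algebra_simps s_def)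
  moreover have "AE w in M. real_cond_exp M (Yalg M y k) (\<lambda>w. Lam c d X y k w * Njump X i j k w * of_bool (X k w = l)
          + s * (Lam c d X y k w * of_bool (X k w = i))) w
      = sigmaNX M c d X y i j k l w + s * qfilt M c d X y k i w"
    using Yk.real_cond_exp_add[OF N_int integrable_mult_right[OF q_int, where c=s]] Yk.real_cond_exp_cmult[OF q_int, of s]
    by eventually_elim (simp add: sigmaNX_def qfilt_def)
  ultimately show ?thesis by (simp only: s_def)
qed

lemma sigmaNX_0: "AE w in M. sigmaNX M c d X y i j 0 m w = 0"
proof -
  have "(\<lambda>w. Lam c d X y 0 w * Njump X i j 0 w * of_bool (X 0 w = m)) = (\<lambda>w. 0)"
    by (simp add: Njump_def)
  then show ?thesis
    using sigma_finite_subalgebra.real_cond_exp_F_meas[OF sigma_finite_Yalg, of "\<lambda>w. 0" 0]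
    by (simp add: sigmaNX_def)
qed

lemma sigmaNX_Suc:
  "AE w in M. sigmaNX M c d X y i j (Suc k) m w =
     gam c d m (y (Suc k) w) * (\<Sum>l\<in>UNIV. Amat \<pi> p (h k w) m l * sigmaNX M c d X y i j k l w)
     + of_bool (m = j) * Amat \<pi> p (h k w) j i * qfilt M c d X y k i w * gam c d j (y (Suc k) w)"
proof -
  define W where "W w = Lam c d X y k w * (Njump X i j k w + of_bool (m = j) * of_bool (X k w = i))" for w
  have integrand: "(\<lambda>w. Lam c d X y (Suc k) w * Njump X i j (Suc k) w * of_bool (X (Suc k) w = m))
      = (\<lambda>w. gam c d m (y (Suc k) w) * W w * of_bool (X (Suc k) w = m))"
    by (auto simp: fun_eq_iff W_def Lam_Suc Njump_Suc algebra_simps)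
  have W_history: "W \<in> borel_measurable (history k)"
    unfolding W_def[abs_def] using Lam_measurable_history
    by (intro borel_measurable_times borel_measurable_add borel_measurable_const Njump_measurable
        borel_measurable_of_bool_eq X_measurable_history) auto
  have W_le: "\<bar>W w\<bar> \<le> (real k + 1) * Lam_dom k w" for w
  proof -
    have "0 \<le> Njump X i j k w + of_bool (m = j) * of_bool (X k w = i)"
      "Njump X i j k w + of_bool (m = j) * of_bool (X k w = i) \<le> real k + 1"
      using Njump_nonneg[of i j k w] Njump_le[of i j k w] by auto
    then have "\<bar>W w\<bar> \<le> Lam_dom k w * (real k + 1)"
      unfolding W_def using Lam_nonneg[of k w] Lam_le_Lam_dom[of k w] by (auto simp: abs_mult intro!: mult_mono)
    then show ?thesis by (simp add: mult.commute)
  qed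
  have W_split: "AE w in M. \<forall>l. real_cond_exp M (Yalg M y k) (\<lambda>w. W w * of_bool (X k w = l)) w
      = sigmaNX M c d X y i j k l w + of_bool (m = j) * of_bool (l = i) * qfilt M c d X y k i w"
    unfolding AE_all_countable W_def by (intro allI cond_exp_Lam_Njump_plus_state)
  show ?thesis
    using cond_exp_step[OF W_history W_le, of m] W_split
    unfolding sigmaNX_def[of _ _ _ _ _ _ _ "Suc k"] integrand
    by eventually_elim (cases "m = j", simp_all add: distrib_left sum.distrib sum_of_bool_eq_mult ac_simps)
qed

end

theorem lemma6p1:
  fixes M :: "'w measure"
    and \<pi> :: "'i::finite \<Rightarrow> nat pmf"
    and p :: "'i \<Rightarrow> 'i \<Rightarrow> real"
    and c d :: "'i \<Rightarrow> real"
    and p0 :: "'i \<Rightarrow> real"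
    and y :: "nat \<Rightarrow> 'w \<Rightarrow> real"
    and h :: "nat \<Rightarrow> 'w \<Rightarrow> nat"
    and X :: "nat \<Rightarrow> 'w \<Rightarrow> 'i"
    and i j :: 'i
  assumes pi_support: "\<And>l. pmf (\<pi> l) 0 = 0"
    and F_pos: "\<And>l k. Fsurv \<pi> l k > 0"
    and p_nonneg: "\<And>l m. m \<noteq> l \<Longrightarrow> p m l \<ge> 0"
    and p_sum: "\<And>l. (\<Sum>m\<in>UNIV - {l}. p m l) = 1"
    and d_pos: "\<And>l. d l > 0"
    and p0_nonneg: "\<And>l. p0 l \<ge> 0"
    and p0_sum: "(\<Sum>l\<in>UNIV. p0 l) = 1"
    and M: "prob_space M"
    and y_meas: "\<And>k. y k \<in> borel_measurable M"
    and y_indep: "prob_space.indep_vars M (\<lambda>_. borel) y UNIV"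
    and y_normal: "\<And>k. distributed M lborel (y k) std_normal_density"
    and h_meas: "\<And>k. h k \<in> measurable (Yalg M y k) (count_space UNIV)"
    and h_pos: "\<And>k w. w \<in> space M \<Longrightarrow> h k w \<ge> 1"
    and X_meas: "\<And>k. X k \<in> measurable M (count_space UNIV)"
    and X_init: "\<And>l. AE w in M. real_cond_exp M (Yinf M y) (\<lambda>w. of_bool (X 0 w = l)) w = p0 l"
    and X_trans: "\<And>k l m. AE w in M. X k w = l \<longrightarrow>
        real_cond_exp M (XYalg M X y k) (\<lambda>w. of_bool (X (Suc k) w = m)) w = Amat \<pi> p (h k w) m l"
    and ij: "i \<noteq> j"
  shows "(AE w in M. \<forall>m. sigmaNX M c d X y i j 0 m w = 0)
    \<and> (\<forall>k. AE w in M. \<forall>m.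
         sigmaNX M c d X y i j (Suc k) m w =
           gam c d m (y (Suc k) w) * (\<Sum>l\<in>UNIV. Amat \<pi> p (h k w) m l * sigmaNX M c d X y i j k l w)
           + of_bool (m = j) * Amat \<pi> p (h k w) j i * qfilt M c d X y k i w * gam c d j (y (Suc k) w))"
proof -
  interpret approx_hidden_model M \<pi> p c d p0 y h X
    using pi_support F_pos d_pos y_meas y_indep y_normal h_meas X_meas X_init X_trans
    by (intro approx_hidden_model.intro approx_hidden_model_axioms.intro M) auto
  show ?thesis using sigmaNX_0 sigmaNX_Suc by (simp add: AE_all_countable)
qed

end
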